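(* Let $R=k[x_1,\dots,x_m]$ be a standard graded polynomial ring over an infinite field $k$, $\lambda:\mathbb Z^m\to\mathbb Z$ a linear map, and $I$ a homogeneous ideal. With $S$ and $\widetilde I$ as in the context, $$r(R/\operatorname{in}_\lambda(I))=r(S/\widetilde I).$$
   Context: For a monomial $u=x^b$, $\lambda(u)=\lambda(b)$. For $0\ne g=\sum a_iu_i\in R$, $\operatorname{in}_\lambda(g)$ is the sum of terms of maximal weight, and $\operatorname{in}_\lambda(I)$ is generated by all $\operatorname{in}_\lambda(g)$, $0\ne g\in I$. With $b(g)=\max\lambda(u_i)$ and a new variable $t$, put $g^*=t^{b(g)}g(t^{-\lambda(x_1)}x_1,\dots,t^{-\lambda(x_m)}x_m)$; $I^*\subseteq R[t]$ is generated by all $g^*$, $g\in I$; $S=k[t]_{(t)}[x_1,\dots,x_m]$ is a standard graded algebra over the local ring $k[t]_{(t)}$ ($\deg x_i=1$, $\deg t=0$), and $\widetilde I=I^*S$. For a standard graded algebra $T$ over a local ring and a finitely generated graded $T$-module $E$ (here $E=R/\operatorname{in}_\lambda(I)$ over $R$, or $E=S/\widetilde I$ over $S$): a reduction of $E$ is an ideal $Q$ of $T$ generated by elements of degree $1$ with $(QE)_n=E_n$ for all large $n$; $r_Q(E)$ is the least $n_0$ with $(QE)_n=E_n$ for all $n>n_0$; $Q$ is minimal if it contains no other reduction of $E$; $r(E)=\min\{r_Q(E):Q\text{ minimal reduction of }E\}$. *)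

theory Defs
  imports "HOL-Library.Poly_Mapping" "HOL-Computational_Algebra.Polynomial"
          "HOL-Computational_Algebra.Fraction_Field"
begin

(* Multivariate polynomials in the variables of a finite type 'v with coefficients in a
  ring K are elements of type ('v <Rightarrow><^sub>0 nat) <Rightarrow><^sub>0 K (monomial exponent vector to coefficient).
  A standard graded algebra over a coefficient subring C of K is the set of polynomials
  with all coefficients in C, graded by total degree in the x-variables. *)

type_synonym ('v, 'a) mpoly = "('v \<Rightarrow>\<^sub>0 nat) \<Rightarrow>\<^sub>0 'a"

definition mdeg :: "('v \<Rightarrow>\<^sub>0 nat) \<Rightarrow> nat" where
  "mdeg a = (\<Sum>v\<in>Poly_Mapping.keys a. Poly_Mapping.lookup a v)"

definition homog :: "nat \<Rightarrow> ('v, 'a::zero) mpoly \<Rightarrow> bool" where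
  "homog n p \<longleftrightarrow> (\<forall>a\<in>Poly_Mapping.keys p. mdeg a = n)"

definition homog_comp :: "nat \<Rightarrow> ('v, 'a::comm_monoid_add) mpoly \<Rightarrow> ('v, 'a) mpoly" where
  "homog_comp n p = (\<Sum>a\<in>{a\<in>Poly_Mapping.keys p. mdeg a = n}. Poly_Mapping.single a (Poly_Mapping.lookup p a))"

definition PR :: "'a::comm_ring_1 set \<Rightarrow> ('v, 'a) mpoly set" where
  "PR C = {p. \<forall>a. Poly_Mapping.lookup p a \<in> C}"

definition is_ideal :: "'a::comm_ring_1 set \<Rightarrow> ('v, 'a) mpoly set \<Rightarrow> bool" where
  "is_ideal C J \<longleftrightarrow> J \<subseteq> PR C \<and> 0 \<in> J \<and> (\<forall>f\<in>J. \<forall>g\<in>J. f + g \<in> J)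
      \<and> (\<forall>f\<in>J. \<forall>r\<in>PR C. r * f \<in> J)"

definition homog_ideal :: "'a::comm_ring_1 set \<Rightarrow> ('v, 'a) mpoly set \<Rightarrow> bool" where
  "homog_ideal C J \<longleftrightarrow> is_ideal C J \<and> (\<forall>f\<in>J. \<forall>n. homog_comp n f \<in> J)"

definition ideal_gen :: "'a::comm_ring_1 set \<Rightarrow> ('v, 'a) mpoly set \<Rightarrow> ('v, 'a) mpoly set" where
  "ideal_gen C G = \<Inter>{J. is_ideal C J \<and> G \<subseteq> J}"

definition ideal_sum :: "('v, 'a::comm_ring_1) mpoly set \<Rightarrow> ('v, 'a) mpoly set \<Rightarrow> ('v, 'a) mpoly set" where
  "ideal_sum A B = {a + b |a b. a \<in> A \<and> b \<in> B}"

(* Module E = T/J with T = PR C.  (QE)_n = E_n  iff every homogeneous element of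
  degree n of T lies in Q + J (J homogeneous). *)
definition red_at :: "'a::comm_ring_1 set \<Rightarrow> ('v, 'a) mpoly set \<Rightarrow> ('v, 'a) mpoly set \<Rightarrow> nat \<Rightarrow> bool" where
  "red_at C J Q n \<longleftrightarrow> (\<forall>f\<in>PR C. homog n f \<longrightarrow> f \<in> ideal_sum Q J)"

definition is_reduction :: "'a::comm_ring_1 set \<Rightarrow> ('v, 'a) mpoly set \<Rightarrow> ('v, 'a) mpoly set \<Rightarrow> bool" where
  "is_reduction C J Q \<longleftrightarrow>
     (\<exists>G. G \<subseteq> {p\<in>PR C. homog 1 p} \<and> Q = ideal_gen C G) \<and> (\<exists>N. \<forall>n\<ge>N. red_at C J Q n)"

definition red_num_Q :: "'a::comm_ring_1 set \<Rightarrow> ('v, 'a) mpoly set \<Rightarrow> ('v, 'a) mpoly set \<Rightarrow> nat" where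
  "red_num_Q C J Q = (LEAST n0. \<forall>n>n0. red_at C J Q n)"

definition minimal_reduction :: "'a::comm_ring_1 set \<Rightarrow> ('v, 'a) mpoly set \<Rightarrow> ('v, 'a) mpoly set \<Rightarrow> bool" where
  "minimal_reduction C J Q \<longleftrightarrow> is_reduction C J Q \<and>
     (\<forall>Q'. is_reduction C J Q' \<and> Q' \<subseteq> Q \<longrightarrow> Q' = Q)"

definition red_num :: "'a::comm_ring_1 set \<Rightarrow> ('v, 'a) mpoly set \<Rightarrow> nat" where
  "red_num C J = Inf {red_num_Q C J Q |Q. minimal_reduction C J Q}"

(* Weights: lambda(b) = sum_i w_i b_i. *)
definition wt :: "('v \<Rightarrow> int) \<Rightarrow> ('v \<Rightarrow>\<^sub>0 nat) \<Rightarrow> int" where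
  "wt w a = (\<Sum>v\<in>Poly_Mapping.keys a. w v * int (Poly_Mapping.lookup a v))"

definition bw :: "('v \<Rightarrow> int) \<Rightarrow> ('v, 'a::zero) mpoly \<Rightarrow> int" where
  "bw w g = Max (wt w ` Poly_Mapping.keys g)"

definition init_form :: "('v \<Rightarrow> int) \<Rightarrow> ('v, 'a::comm_monoid_add) mpoly \<Rightarrow> ('v, 'a) mpoly" where
  "init_form w g = (\<Sum>a\<in>{a\<in>Poly_Mapping.keys g. wt w a = bw w g}. Poly_Mapping.single a (Poly_Mapping.lookup g a))"

definition init_ideal :: "('v \<Rightarrow> int) \<Rightarrow> ('v, 'a::comm_ring_1) mpoly set \<Rightarrow> ('v, 'a) mpoly set" where
  "init_ideal w I = ideal_gen UNIV {init_form w g |g. g \<in> I \<and> g \<noteq> 0}"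

(* g* = t^{b(g)} g(t^{-lambda(x_1)} x_1, ...), as a polynomial in x with coefficients in
  k[t], embedded in k(t) = 'k poly fract. *)
definition hstar :: "('v \<Rightarrow> int) \<Rightarrow> ('v, 'k::field) mpoly \<Rightarrow> ('v, 'k poly fract) mpoly" where
  "hstar w g = (\<Sum>a\<in>Poly_Mapping.keys g.
      Poly_Mapping.single a (Fract (monom (Poly_Mapping.lookup g a) (nat (bw w g - wt w a))) 1))"

definition loc_t :: "'k::field poly fract set" where
  "loc_t = {Fract p q |p q. poly q 0 \<noteq> 0}"

definition tilde_ideal :: "('v \<Rightarrow> int) \<Rightarrow> ('v, 'k::field) mpoly set \<Rightarrow> ('v, 'k poly fract) mpoly set" where
  "tilde_ideal w I = ideal_gen loc_t (hstar w ` I)"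

end

(*
  Specialising t to 0 (at_t0, and J(0) = at_t0 ` J) maps S = k[t]_(t)[x] onto R; since the part
  of g* free of t is the initial form of g, it maps the ideal I~ onto in_lambda(I). The equality
  of reduction numbers holds for every ideal J of S that is homogeneous in x, with R/J(0) in
  place of R/in_lambda(I).

  For a homogeneous ideal Q of S, (Q (S/J))_n = (S/J)_n holds iff (Q(0) (R/J(0)))_n = (R/J(0))_n:
  one direction is reduction modulo t; for the other, S_n is a free k[t]_(t)-module on the
  monomials of degree n, and Nakayama's lemma lifts a spanning set modulo t to one over
  k[t]_(t). Hence Q -> Q(0) sends minimal reductions of S/J to minimal reductions of R/J(0)
  with the same reduction number (a smaller reduction below Q(0) lifts, generator by generator,
  to one below Q). It is also onto: a minimal reduction of R/J(0) is generated by finitely many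
  linear forms, and by Nakayama once more the ideal of S they generate is a minimal reduction
  of S/J. The two reduction numbers are therefore infima of the same set.
*)

theory Submission
  imports Defs "HOL-Library.FuncSet"
begin

section \<open>Polynomials over a subring and their ideals\<close>

definition is_subring :: "'a::comm_ring_1 set \<Rightarrow> bool" where
  "is_subring C \<longleftrightarrow> 0 \<in> C \<and> 1 \<in> C \<and> (\<forall>x\<in>C. \<forall>y\<in>C. x + y \<in> C \<and> x * y \<in> C \<and> - x \<in> C)"

lemma is_subring_UNIV: "is_subring UNIV"
  by (simp add: is_subring_def)

definition smult_mp :: "'a::comm_ring_1 \<Rightarrow> ('v, 'a) mpoly \<Rightarrow> ('v, 'a) mpoly" where
  "smult_mp c p = Poly_Mapping.single 0 c * p"

lemma lookup_smult_mp [simp]: "Poly_Mapping.lookup (smult_mp c p) a = c * Poly_Mapping.lookup p a"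
  unfolding smult_mp_def mult_map_scale_conv_mult[symmetric] by transfer (simp add: when_def)

lemma smult_mp_add_right: "smult_mp c (p + q) = smult_mp c p + smult_mp c q"
  by (simp add: smult_mp_def distrib_left)

lemma smult_mp_add_left: "smult_mp (c + d) p = smult_mp c p + smult_mp d p"
  by (simp add: smult_mp_def single_add distrib_right)

lemma smult_mp_diff_left: "smult_mp (c - d) p = smult_mp c p - smult_mp d p"
  by (simp add: smult_mp_def single_diff left_diff_distrib)

lemma smult_mp_smult_mp [simp]: "smult_mp c (smult_mp d p) = smult_mp (c * d) p"
  by (simp add: smult_mp_def mult.assoc[symmetric] mult_single)

lemma smult_mp_1 [simp]: "smult_mp 1 p = p"
  by (simp add: smult_mp_def)

lemma smult_mp_0_left [simp]: "smult_mp 0 p = 0"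
  by (simp add: smult_mp_def)

lemma smult_mp_sum_right: "smult_mp c (sum f A) = (\<Sum>a\<in>A. smult_mp c (f a))"
  by (simp add: smult_mp_def sum_distrib_left)

lemma mpoly_expand:
  assumes "finite A" "Poly_Mapping.keys p \<subseteq> A"
  shows "(\<Sum>a\<in>A. Poly_Mapping.single a (Poly_Mapping.lookup p a)) = p"
proof (rule poly_mapping_eqI)
  fix k
  have "(\<Sum>x\<in>A. Poly_Mapping.lookup p x when x = k) = (\<Sum>x\<in>A. if x = k then Poly_Mapping.lookup p x else 0)"
    by (rule sum.cong) (auto simp: when_def)
  also have "\<dots> = Poly_Mapping.lookup p k"
    using assms by (auto simp: in_keys_iff)
  finally show "Poly_Mapping.lookup (\<Sum>a\<in>A. Poly_Mapping.single a (Poly_Mapping.lookup p a)) k = Poly_Mapping.lookup p k"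
    by (simp add: lookup_sum lookup_single)
qed

lemma mpoly_mult_expand:
  fixes p q :: "('v, 'a::comm_ring_1) mpoly"
  assumes "finite A" "Poly_Mapping.keys p \<subseteq> A" "finite B" "Poly_Mapping.keys q \<subseteq> B"
  shows "p * q = (\<Sum>a\<in>A. \<Sum>b\<in>B. Poly_Mapping.single (a + b) (Poly_Mapping.lookup p a * Poly_Mapping.lookup q b))"
proof -
  have "p * q = (\<Sum>a\<in>A. Poly_Mapping.single a (Poly_Mapping.lookup p a)) * (\<Sum>b\<in>B. Poly_Mapping.single b (Poly_Mapping.lookup q b))"
    using mpoly_expand[OF assms(1,2)] mpoly_expand[OF assms(3,4)] by simp
  thus ?thesis
    by (simp add: sum_product mult_single)
qed

lemma PR_UNIV [simp]: "PR UNIV = UNIV"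
  by (simp add: PR_def)

lemma PR_lookup: "p \<in> PR C \<Longrightarrow> Poly_Mapping.lookup p a \<in> C"
  by (simp add: PR_def)

lemma PR_I: "(\<And>a. Poly_Mapping.lookup p a \<in> C) \<Longrightarrow> p \<in> PR C"
  by (simp add: PR_def)

context
  fixes C :: "'a::comm_ring_1 set"
  assumes C: "is_subring C"
begin

lemma PR_0: "0 \<in> PR C"
  using C by (simp add: PR_def is_subring_def)

lemma PR_add: "p \<in> PR C \<Longrightarrow> q \<in> PR C \<Longrightarrow> p + q \<in> PR C"
  using C by (simp add: PR_def is_subring_def lookup_add)

lemma PR_uminus: "p \<in> PR C \<Longrightarrow> - p \<in> PR C"
  using C unfolding PR_def is_subring_def by auto

lemma PR_diff: "p \<in> PR C \<Longrightarrow> q \<in> PR C \<Longrightarrow> p - q \<in> PR C"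
  by (metis PR_add PR_uminus diff_conv_add_uminus)

lemma PR_single: "c \<in> C \<Longrightarrow> Poly_Mapping.single a c \<in> PR C"
  using C by (simp add: PR_def is_subring_def lookup_single when_def)

lemma PR_sum: "(\<And>i. i \<in> A \<Longrightarrow> f i \<in> PR C) \<Longrightarrow> sum f A \<in> PR C"
  by (induct A rule: infinite_finite_induct) (auto simp: PR_0 PR_add)

lemma PR_mult:
  assumes "p \<in> PR C" "q \<in> PR C"
  shows "p * q \<in> PR C"
proof -
  have "p * q = (\<Sum>a\<in>Poly_Mapping.keys p. \<Sum>b\<in>Poly_Mapping.keys q.
      Poly_Mapping.single (a + b) (Poly_Mapping.lookup p a * Poly_Mapping.lookup q b))"
    by (rule mpoly_mult_expand) auto
  also have "\<dots> \<in> PR C"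
    using C assms by (intro PR_sum PR_single) (auto simp: is_subring_def PR_def)
  finally show ?thesis .
qed

lemma PR_smult_mp: "c \<in> C \<Longrightarrow> p \<in> PR C \<Longrightarrow> smult_mp c p \<in> PR C"
  using C by (simp add: PR_def is_subring_def)

end

lemma is_ideal_PR: "is_subring C \<Longrightarrow> is_ideal C (PR C)"
  by (simp add: is_ideal_def PR_0 PR_add PR_mult)

lemma ideal_PR: "is_ideal C J \<Longrightarrow> J \<subseteq> PR C"
  by (simp add: is_ideal_def)

lemma ideal_0: "is_ideal C J \<Longrightarrow> 0 \<in> J"
  by (simp add: is_ideal_def)

lemma ideal_add: "is_ideal C J \<Longrightarrow> f \<in> J \<Longrightarrow> g \<in> J \<Longrightarrow> f + g \<in> J"
  by (simp add: is_ideal_def)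

lemma ideal_mult: "is_ideal C J \<Longrightarrow> f \<in> J \<Longrightarrow> r \<in> PR C \<Longrightarrow> r * f \<in> J"
  by (simp add: is_ideal_def)

lemma ideal_sum_closed: "is_ideal C J \<Longrightarrow> (\<And>i. i \<in> A \<Longrightarrow> f i \<in> J) \<Longrightarrow> sum f A \<in> J"
  by (induct A rule: infinite_finite_induct) (auto simp: ideal_0 ideal_add)

lemma ideal_smult_mp: "is_subring C \<Longrightarrow> is_ideal C J \<Longrightarrow> c \<in> C \<Longrightarrow> f \<in> J \<Longrightarrow> smult_mp c f \<in> J"
  unfolding smult_mp_def by (simp add: ideal_mult PR_single)

lemma ideal_gen_is_ideal:
  assumes "is_subring C" "G \<subseteq> PR C"
  shows "is_ideal C (ideal_gen C G)"
proof -
  have "PR C \<in> {J. is_ideal C J \<and> G \<subseteq> J}"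
    using assms is_ideal_PR by auto
  thus ?thesis
    unfolding is_ideal_def[of C "ideal_gen C G"] unfolding ideal_gen_def
    by (intro conjI ballI; auto simp: is_ideal_def)
qed

lemma ideal_gen_subset: "G \<subseteq> ideal_gen C G"
  by (auto simp: ideal_gen_def)

lemma ideal_gen_least: "is_ideal C J \<Longrightarrow> G \<subseteq> J \<Longrightarrow> ideal_gen C G \<subseteq> J"
  by (auto simp: ideal_gen_def)

lemma ideal_gen_mono: "G \<subseteq> H \<Longrightarrow> ideal_gen C G \<subseteq> ideal_gen C H"
  by (auto simp: ideal_gen_def)

lemma ideal_gen_UNIV_is_ideal: "is_ideal UNIV (ideal_gen UNIV G)"
  by (rule ideal_gen_is_ideal) (auto simp: is_subring_UNIV)

lemma ideal_sum_is_ideal: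
  assumes C: "is_subring C" and A: "is_ideal C A" and B: "is_ideal C B"
  shows "is_ideal C (ideal_sum A B)"
  unfolding is_ideal_def
proof (intro conjI ballI)
  show "ideal_sum A B \<subseteq> PR C"
    using A B C by (auto simp: ideal_sum_def intro!: PR_add dest: ideal_PR)
  show "0 \<in> ideal_sum A B"
    using A B by (auto simp: ideal_sum_def intro!: exI[of _ 0] ideal_0)
  show "f + g \<in> ideal_sum A B" if "f \<in> ideal_sum A B" "g \<in> ideal_sum A B" for f g
  proof -
    from that obtain a b a' b' where "f = a + b" "g = a' + b'" "a \<in> A" "b \<in> B" "a' \<in> A" "b' \<in> B"
      by (auto simp: ideal_sum_def)
    moreover from calculation have "f + g = (a + a') + (b + b')"
      by (simp add: ac_simps)
    ultimately show ?thesis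
      unfolding ideal_sum_def using A B by (blast intro: ideal_add)
  qed
  show "r * f \<in> ideal_sum A B" if "f \<in> ideal_sum A B" "r \<in> PR C" for f r
  proof -
    from that obtain a b where "f = a + b" "a \<in> A" "b \<in> B"
      by (auto simp: ideal_sum_def)
    moreover from calculation have "r * f = r * a + r * b"
      by (simp add: distrib_left)
    ultimately show ?thesis
      unfolding ideal_sum_def using A B that by (blast intro: ideal_mult)
  qed
qed

lemma ideal_gen_finite_subset:
  fixes G :: "('v, 'a::comm_ring_1) mpoly set"
  assumes C: "is_subring C" and G: "G \<subseteq> PR C" and q: "q \<in> ideal_gen C G"
  obtains F where "F \<subseteq> G" "finite F" "q \<in> ideal_gen C F"
proof -
  let ?D = "{f. \<exists>F. F \<subseteq> G \<and> finite F \<and> f \<in> ideal_gen C F}"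
  have F_ideal: "is_ideal C (ideal_gen C F)" if "F \<subseteq> G" for F
    using that G by (intro ideal_gen_is_ideal[OF C]) auto
  have "is_ideal C ?D"
    unfolding is_ideal_def[of C ?D]
  proof (intro conjI ballI)
    show "?D \<subseteq> PR C"
      using F_ideal ideal_PR by blast
    have "0 \<in> ideal_gen C ({} :: ('v, 'a) mpoly set)"
      using ideal_0[OF F_ideal] by simp
    thus "0 \<in> ?D"
      by blast
    show "f + g \<in> ?D" if "f \<in> ?D" "g \<in> ?D" for f g
    proof -
      from that obtain F1 F2 where F: "F1 \<subseteq> G" "finite F1" "f \<in> ideal_gen C F1"
        "F2 \<subseteq> G" "finite F2" "g \<in> ideal_gen C F2"
        by blast
      have "f \<in> ideal_gen C (F1 \<union> F2)" "g \<in> ideal_gen C (F1 \<union> F2)"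
        using F(3,6) ideal_gen_mono[of F1 "F1 \<union> F2" C] ideal_gen_mono[of F2 "F1 \<union> F2" C] by auto
      hence "f + g \<in> ideal_gen C (F1 \<union> F2)"
        using F_ideal[of "F1 \<union> F2"] F(1,4) ideal_add by blast
      thus ?thesis
        using F(1,2,4,5) by (intro CollectI exI[of _ "F1 \<union> F2"]) simp
    qed
    show "r * f \<in> ?D" if "f \<in> ?D" "r \<in> PR C" for f r
    proof -
      from that obtain F where F: "F \<subseteq> G" "finite F" "f \<in> ideal_gen C F"
        by blast
      hence "r * f \<in> ideal_gen C F"
        using that(2) ideal_mult[OF F_ideal] by blast
      thus ?thesis
        using F by blast
    qed
  qed
  moreover have "G \<subseteq> ?D"
  proof
    fix g
    assume "g \<in> G"
    moreover have "g \<in> ideal_gen C {g}"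
      using ideal_gen_subset[of "{g}" C] by simp
    ultimately show "g \<in> ?D"
      by (intro CollectI exI[of _ "{g}"]) simp
  qed
  ultimately have "ideal_gen C G \<subseteq> ?D"
    by (rule ideal_gen_least)
  thus ?thesis
    using q that by blast
qed

definition span_mp :: "'a set \<Rightarrow> ('i \<Rightarrow> ('v, 'a::comm_ring_1) mpoly) \<Rightarrow> 'i set \<Rightarrow> ('v, 'a) mpoly set" where
  "span_mp C e B = {\<Sum>g\<in>B. smult_mp (c g) (e g) |c. \<forall>g\<in>B. c g \<in> C}"

lemma span_mpI: "(\<And>g. g \<in> B \<Longrightarrow> c g \<in> C) \<Longrightarrow> (\<Sum>g\<in>B. smult_mp (c g) (e g)) \<in> span_mp C e B"
  unfolding span_mp_def by blast

lemma span_mpE: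
  assumes "x \<in> span_mp C e B"
  obtains c where "\<forall>g\<in>B. c g \<in> C" "x = (\<Sum>g\<in>B. smult_mp (c g) (e g))"
  using assms unfolding span_mp_def by blast

context
  fixes C :: "'a::comm_ring_1 set"
  assumes C: "is_subring C"
begin

lemma span_mp_0: "0 \<in> span_mp C e B"
  using span_mpI[of B "\<lambda>_. 0" C e] C by (simp add: is_subring_def)

lemma span_mp_add:
  assumes "x \<in> span_mp C e B" "y \<in> span_mp C e B"
  shows "x + y \<in> span_mp C e B"
proof -
  obtain c where c: "\<forall>g\<in>B. c g \<in> C" "x = (\<Sum>g\<in>B. smult_mp (c g) (e g))"
    using assms(1) by (rule span_mpE)
  obtain d where d: "\<forall>g\<in>B. d g \<in> C" "y = (\<Sum>g\<in>B. smult_mp (d g) (e g))"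
    using assms(2) by (rule span_mpE)
  show ?thesis
    using span_mpI[of B "\<lambda>g. c g + d g" C e] c d C by (simp add: is_subring_def smult_mp_add_left sum.distrib)
qed

lemma span_mp_sum: "(\<And>i. i \<in> A \<Longrightarrow> f i \<in> span_mp C e B) \<Longrightarrow> sum f A \<in> span_mp C e B"
  by (induct A rule: infinite_finite_induct) (auto intro: span_mp_0 span_mp_add)

lemma span_mp_smult_mp:
  assumes "a \<in> C" "x \<in> span_mp C e B"
  shows "smult_mp a x \<in> span_mp C e B"
proof -
  obtain c where "\<forall>g\<in>B. c g \<in> C" "x = (\<Sum>g\<in>B. smult_mp (c g) (e g))"
    using assms(2) by (rule span_mpE)
  thus ?thesis
    using span_mpI[of B "\<lambda>g. a * c g" C e] assms(1) C by (simp add: is_subring_def smult_mp_sum_right)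
qed

lemma span_mp_generator:
  assumes "finite B" "g \<in> B"
  shows "e g \<in> span_mp C e B"
proof -
  have "(\<Sum>h\<in>B. smult_mp (if h = g then 1 else 0) (e h)) = (\<Sum>h\<in>B. if h = g then e h else 0)"
    by (rule sum.cong) auto
  also have "\<dots> = e g"
    using assms by simp
  finally show ?thesis
    using span_mpI[of B "\<lambda>h. if h = g then 1 else 0" C e] C by (simp add: is_subring_def)
qed

lemma span_mp_subset_ideal:
  assumes N: "is_ideal C N" and "e ` B \<subseteq> N"
  shows "span_mp C e B \<subseteq> N"
proof
  fix x
  assume "x \<in> span_mp C e B"
  then obtain c where "\<forall>g\<in>B. c g \<in> C" "x = (\<Sum>g\<in>B. smult_mp (c g) (e g))"
    by (rule span_mpE)
  moreover have "(\<Sum>g\<in>B. smult_mp (c g) (e g)) \<in> N"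
    using calculation(1) assms(2) by (intro ideal_sum_closed[OF N] ideal_smult_mp[OF C N]) auto
  ultimately show "x \<in> N"
    by simp
qed

end

section \<open>Homogeneous components and homogeneous ideals\<close>

lemma lookup_homog_comp:
  "Poly_Mapping.lookup (homog_comp n p) a = (if mdeg a = n then Poly_Mapping.lookup p a else 0)"
proof -
  have "Poly_Mapping.lookup (homog_comp n p) a =
     (\<Sum>x\<in>{a \<in> Poly_Mapping.keys p. mdeg a = n}. if x = a then Poly_Mapping.lookup p x else 0)"
    unfolding homog_comp_def lookup_sum lookup_single by (rule sum.cong) (auto simp: when_def)
  thus ?thesis
    by (auto simp: in_keys_iff)
qed

lemma keys_homog_comp: "Poly_Mapping.keys (homog_comp n p) = {a \<in> Poly_Mapping.keys p. mdeg a = n}"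
  by (auto simp: in_keys_iff lookup_homog_comp split: if_splits)

lemma homog_iff: "homog n p \<longleftrightarrow> (\<forall>a. Poly_Mapping.lookup p a \<noteq> 0 \<longrightarrow> mdeg a = n)"
  by (auto simp: homog_def in_keys_iff)

lemma homog_comp_add: "homog_comp n (p + q) = homog_comp n p + homog_comp n q"
  by (rule poly_mapping_eqI) (simp add: lookup_homog_comp lookup_add)

lemma homog_comp_sum: "homog_comp n (sum f A) = (\<Sum>i\<in>A. homog_comp n (f i))"
  by (rule poly_mapping_eqI) (simp add: lookup_homog_comp lookup_sum)

lemma homog_comp_homog: "homog d p \<Longrightarrow> homog_comp n p = (if n = d then p else 0)"
  by (rule poly_mapping_eqI) (auto simp: lookup_homog_comp homog_iff)

lemma homog_homog_comp: "homog n (homog_comp n p)"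
  by (simp add: homog_iff lookup_homog_comp)

lemma PR_homog_comp: "is_subring C \<Longrightarrow> p \<in> PR C \<Longrightarrow> homog_comp n p \<in> PR C"
  by (simp add: PR_def lookup_homog_comp is_subring_def)

lemma homog_diff: "homog n p \<Longrightarrow> homog n q \<Longrightarrow> homog n (p - q :: ('v, 'a::ab_group_add) mpoly)"
  unfolding homog_iff lookup_minus by (metis diff_zero)

lemma mdeg_eq_sum:
  assumes "finite K" "Poly_Mapping.keys a \<subseteq> K"
  shows "mdeg a = (\<Sum>v\<in>K. Poly_Mapping.lookup a v)"
  unfolding mdeg_def using assms by (intro sum.mono_neutral_left) (auto simp: in_keys_iff)

lemma mdeg_add: "mdeg (a + b) = mdeg a + mdeg b"
proof -
  let ?K = "Poly_Mapping.keys a \<union> Poly_Mapping.keys b"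
  have "mdeg (a + b) = (\<Sum>v\<in>?K. Poly_Mapping.lookup (a + b) v)"
    using keys_add[of a b] by (intro mdeg_eq_sum) auto
  also have "\<dots> = (\<Sum>v\<in>?K. Poly_Mapping.lookup a v) + (\<Sum>v\<in>?K. Poly_Mapping.lookup b v)"
    by (simp add: lookup_add sum.distrib)
  also have "\<dots> = mdeg a + mdeg b"
    by (subst (1 2) mdeg_eq_sum[of ?K]) auto
  finally show ?thesis .
qed

lemma mdeg_eq_0_iff: "mdeg a = 0 \<longleftrightarrow> a = 0"
proof
  assume "mdeg a = 0"
  hence "\<forall>v\<in>Poly_Mapping.keys a. Poly_Mapping.lookup a v = 0"
    unfolding mdeg_def by simp
  thus "a = 0"
    by (metis in_keys_iff keys_eq_empty ex_in_conv)
qed (simp add: mdeg_def)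

lemma mdeg_single: "mdeg (Poly_Mapping.single v k) = k"
  by (simp add: mdeg_def)

lemma lookup_le_mdeg: "Poly_Mapping.lookup a v \<le> mdeg a"
  by (cases "v \<in> Poly_Mapping.keys a") (auto simp: mdeg_def in_keys_iff intro: member_le_sum)

lemma finite_mdeg_eq: "finite {a :: 'v::finite \<Rightarrow>\<^sub>0 nat. mdeg a = n}"
proof -
  have "inj (Poly_Mapping.lookup :: ('v \<Rightarrow>\<^sub>0 nat) \<Rightarrow> _)"
    by (rule injI, rule poly_mapping_eqI) simp
  hence "finite (Poly_Mapping.lookup -` PiE UNIV (\<lambda>_::'v. {..n}))"
    by (intro finite_vimageI finite_PiE) auto
  moreover have "{a :: 'v \<Rightarrow>\<^sub>0 nat. mdeg a = n} \<subseteq> Poly_Mapping.lookup -` PiE UNIV (\<lambda>_. {..n})"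
    using lookup_le_mdeg by (auto simp: PiE_def extensional_def)
  ultimately show ?thesis
    by (rule finite_subset[rotated])
qed

lemma mdeg_divisor:
  assumes "N \<le> mdeg b"
  obtains a d where "b = a + d" "mdeg a = N"
  using assms
proof (induction N arbitrary: thesis)
  case 0
  show ?case
    by (rule "0.prems"(1)[of 0 b]) (simp_all add: mdeg_def)
next
  case (Suc N)
  obtain a d where ad: "b = a + d" "mdeg a = N"
    using Suc.IH Suc.prems(2) by (metis Suc_leD)
  hence "d \<noteq> 0"
    using Suc.prems(2) by (auto simp: mdeg_add mdeg_def)
  then obtain v where v: "Poly_Mapping.lookup d v \<noteq> 0"
    by (metis poly_mapping_eqI lookup_zero)
  define d' where "d' = d - Poly_Mapping.single v 1"
  have "d = Poly_Mapping.single v 1 + d'"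
    by (rule poly_mapping_eqI) (use v in \<open>auto simp: d'_def lookup_add lookup_minus lookup_single when_def\<close>)
  hence "b = (a + Poly_Mapping.single v 1) + d'"
    using ad by (simp add: add.assoc)
  moreover have "mdeg (a + Poly_Mapping.single v 1) = Suc N"
    using ad by (simp add: mdeg_add mdeg_single)
  ultimately show ?case
    by (rule Suc.prems(1))
qed

lemma homog_in_span_monomials:
  fixes p :: "('v::finite, 'a::comm_ring_1) mpoly"
  assumes "p \<in> PR C" "homog n p"
  shows "p \<in> span_mp C (\<lambda>b. Poly_Mapping.single b 1) {b. mdeg b = n}"
proof -
  have "Poly_Mapping.keys p \<subseteq> {b. mdeg b = n}"
    using assms(2) by (auto simp: homog_def)
  hence "p = (\<Sum>b\<in>{b. mdeg b = n}. Poly_Mapping.single b (Poly_Mapping.lookup p b))"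
    by (simp add: mpoly_expand finite_mdeg_eq)
  also have "\<dots> = (\<Sum>b\<in>{b. mdeg b = n}. smult_mp (Poly_Mapping.lookup p b) (Poly_Mapping.single b 1))"
    by (simp add: smult_mp_def mult_single)
  also have "\<dots> \<in> span_mp C (\<lambda>b. Poly_Mapping.single b 1) {b. mdeg b = n}"
    using assms(1) by (intro span_mpI PR_lookup)
  finally show ?thesis .
qed

lemma homog_mult: "homog i p \<Longrightarrow> homog j q \<Longrightarrow> homog (i + j) (p * q)"
  unfolding homog_def using keys_mult[of p q] by (force simp: mdeg_add)

definition hdeg :: "('v, 'a::zero) mpoly \<Rightarrow> nat" where
  "hdeg p = Max (insert 0 (mdeg ` Poly_Mapping.keys p))"

lemma sum_homog_comp: "hdeg p \<le> D \<Longrightarrow> (\<Sum>i\<le>D. homog_comp i p) = p"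
proof (rule poly_mapping_eqI)
  fix a
  assume D: "hdeg p \<le> D"
  have "Poly_Mapping.lookup p a \<noteq> 0 \<Longrightarrow> mdeg a \<le> hdeg p"
    unfolding hdeg_def by (rule Max_ge) (auto simp: in_keys_iff)
  hence "(\<Sum>i\<le>D. if i = mdeg a then Poly_Mapping.lookup p a else 0) = Poly_Mapping.lookup p a"
    using D by (cases "Poly_Mapping.lookup p a = 0") auto
  thus "Poly_Mapping.lookup (\<Sum>i\<le>D. homog_comp i p) a = Poly_Mapping.lookup p a"
    by (simp add: lookup_sum lookup_homog_comp eq_commute)
qed

lemma homog_comp_mult:
  "homog_comp n (p * q) =
     (\<Sum>i\<le>hdeg p. \<Sum>k\<le>hdeg q. if i + k = n then homog_comp i p * homog_comp k q else 0)"
proof -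
  have "p * q = (\<Sum>i\<le>hdeg p. homog_comp i p) * (\<Sum>k\<le>hdeg q. homog_comp k q)"
    by (simp add: sum_homog_comp)
  hence "homog_comp n (p * q) = (\<Sum>i\<le>hdeg p. \<Sum>k\<le>hdeg q. homog_comp n (homog_comp i p * homog_comp k q))"
    by (simp add: sum_product homog_comp_sum)
  also have "\<dots> = (\<Sum>i\<le>hdeg p. \<Sum>k\<le>hdeg q. if i + k = n then homog_comp i p * homog_comp k q else 0)"
    by (intro sum.cong refl) (simp add: homog_comp_homog[OF homog_mult[OF homog_homog_comp homog_homog_comp]] eq_commute)
  finally show ?thesis .
qed

lemma homog_comp_0_eq: "homog_comp 0 r = Poly_Mapping.single 0 (Poly_Mapping.lookup r 0)"
  by (rule poly_mapping_eqI) (auto simp: lookup_homog_comp lookup_single when_def mdeg_eq_0_iff)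

lemma homog_ideal_ideal_gen:
  assumes C: "is_subring C" and G: "G \<subseteq> PR C"
    and hG: "\<And>g n. g \<in> G \<Longrightarrow> homog_comp n g \<in> ideal_gen C G"
  shows "homog_ideal C (ideal_gen C G)"
proof -
  let ?J = "ideal_gen C G"
  have J: "is_ideal C ?J"
    by (rule ideal_gen_is_ideal[OF C G])
  let ?X = "{m \<in> ?J. \<forall>n. homog_comp n m \<in> ?J}"
  have "is_ideal C ?X"
    unfolding is_ideal_def
  proof (intro conjI ballI)
    show "?X \<subseteq> PR C"
      using J ideal_PR by blast
    show "0 \<in> ?X"
      using J by (simp add: ideal_0 homog_comp_def)
    show "f + g \<in> ?X" if "f \<in> ?X" "g \<in> ?X" for f g
      using that J by (simp add: ideal_add homog_comp_add)
    show "r * f \<in> ?X" if "f \<in> ?X" "r \<in> PR C" for f r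
    proof -
      have "homog_comp n (r * f) \<in> ?J" for n
        unfolding homog_comp_mult
        using that J by (auto intro!: ideal_sum_closed ideal_mult PR_homog_comp[OF C] simp: ideal_0)
      thus ?thesis
        using that J by (simp add: ideal_mult)
    qed
  qed
  moreover have "G \<subseteq> ?X"
    using hG ideal_gen_subset by blast
  ultimately have "?J \<subseteq> ?X"
    by (rule ideal_gen_least)
  thus ?thesis
    using J by (auto simp: homog_ideal_def)
qed

lemma homog_ideal_ideal_gen_linear:
  assumes C: "is_subring C" and G: "G \<subseteq> {p \<in> PR C. homog 1 p}"
  shows "homog_ideal C (ideal_gen C G)"
proof (rule homog_ideal_ideal_gen[OF C])
  show G_PR: "G \<subseteq> PR C"
    using G by blast
  show "homog_comp n g \<in> ideal_gen C G" if "g \<in> G" for g n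
  proof -
    have "homog_comp n g = (if n = 1 then g else 0)"
      using that G by (intro homog_comp_homog) blast
    thus ?thesis
      using that ideal_gen_subset ideal_0[OF ideal_gen_is_ideal[OF C G_PR]] by auto
  qed
qed

lemma homog_ideal_ideal_sum:
  assumes C: "is_subring C" and A: "homog_ideal C A" and B: "homog_ideal C B"
  shows "homog_ideal C (ideal_sum A B)"
  unfolding homog_ideal_def
proof (intro conjI ballI allI)
  show "is_ideal C (ideal_sum A B)"
    using A B by (intro ideal_sum_is_ideal[OF C]) (auto simp: homog_ideal_def)
  show "homog_comp n f \<in> ideal_sum A B" if "f \<in> ideal_sum A B" for f n
  proof -
    from that obtain a b where "f = a + b" "a \<in> A" "b \<in> B"
      by (auto simp: ideal_sum_def)
    moreover from calculation have "homog_comp n a \<in> A" "homog_comp n b \<in> B"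
      using A B by (auto simp: homog_ideal_def)
    ultimately show ?thesis
      unfolding ideal_sum_def by (auto simp: homog_comp_add)
  qed
qed

section \<open>Reductions\<close>

lemma red_at_of_monomials:
  fixes Q J :: "('v, 'a::comm_ring_1) mpoly set"
  assumes C: "is_subring C" and QJ: "is_ideal C (ideal_sum Q J)"
    and monomials: "\<And>a. mdeg a = m \<Longrightarrow> Poly_Mapping.single a 1 \<in> ideal_sum Q J"
    and "m \<le> n"
  shows "red_at C J Q n"
  unfolding red_at_def
proof (intro ballI impI)
  fix f :: "('v, 'a) mpoly"
  assume f: "f \<in> PR C" "homog n f"
  have "f = (\<Sum>b\<in>Poly_Mapping.keys f. Poly_Mapping.single b (Poly_Mapping.lookup f b))"
    by (simp add: mpoly_expand)
  also have "\<dots> \<in> ideal_sum Q J"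
  proof (rule ideal_sum_closed[OF QJ])
    fix b
    assume "b \<in> Poly_Mapping.keys f"
    hence "m \<le> mdeg b"
      using f(2) \<open>m \<le> n\<close> by (simp add: homog_def)
    then obtain a d where ad: "b = a + d" "mdeg a = m"
      by (rule mdeg_divisor)
    have "Poly_Mapping.single d (Poly_Mapping.lookup f b) * Poly_Mapping.single a 1 \<in> ideal_sum Q J"
      using f(1) monomials[OF ad(2)] by (intro ideal_mult[OF QJ] PR_single[OF C] PR_lookup)
    thus "Poly_Mapping.single b (Poly_Mapping.lookup f b) \<in> ideal_sum Q J"
      by (simp add: mult_single ad add.commute)
  qed
  finally show "f \<in> ideal_sum Q J" .
qed

lemma red_at_monomial:
  "is_subring C \<Longrightarrow> red_at C J Q (mdeg a) \<Longrightarrow> Poly_Mapping.single a 1 \<in> ideal_sum Q J"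
  using PR_single[of C 1 a] by (auto simp: red_at_def homog_def is_subring_def)

lemma red_at_finite_generators:
  fixes J :: "('v::finite, 'a::comm_ring_1) mpoly set"
  assumes C: "is_subring C" and G: "G \<subseteq> PR C" and J: "is_ideal C J"
    and red: "red_at C J (ideal_gen C G) N"
  obtains G0 where "G0 \<subseteq> G" "finite G0" "\<And>n. N \<le> n \<Longrightarrow> red_at C J (ideal_gen C G0) n"
proof -
  define A where "A = {a :: 'v \<Rightarrow>\<^sub>0 nat. mdeg a = N}"
  have "\<exists>F. F \<subseteq> G \<and> finite F \<and> Poly_Mapping.single a 1 \<in> ideal_sum (ideal_gen C F) J"
    if "a \<in> A" for a
  proof -
    have "Poly_Mapping.single a 1 \<in> ideal_sum (ideal_gen C G) J"
      using that red by (intro red_at_monomial[OF C]) (simp add: A_def)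
    then obtain q j where qj: "Poly_Mapping.single a 1 = q + j" "q \<in> ideal_gen C G" "j \<in> J"
      by (auto simp: ideal_sum_def)
    obtain F where "F \<subseteq> G" "finite F" "q \<in> ideal_gen C F"
      using ideal_gen_finite_subset[OF C G qj(2)] .
    thus ?thesis
      using qj by (auto simp: ideal_sum_def)
  qed
  then obtain F where F: "\<And>a. a \<in> A \<Longrightarrow>
      F a \<subseteq> G \<and> finite (F a) \<and> Poly_Mapping.single a 1 \<in> ideal_sum (ideal_gen C (F a)) J"
    by metis
  define G0 where "G0 = (\<Union>a\<in>A. F a)"
  have G0: "G0 \<subseteq> G" "finite G0"
    using F finite_mdeg_eq[of N] by (auto simp: G0_def A_def)
  have "is_ideal C (ideal_sum (ideal_gen C G0) J)"
    using G0 G J by (intro ideal_sum_is_ideal[OF C] ideal_gen_is_ideal[OF C]) auto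
  moreover have "Poly_Mapping.single a 1 \<in> ideal_sum (ideal_gen C G0) J" if "mdeg a = N" for a
  proof -
    have "ideal_gen C (F a) \<subseteq> ideal_gen C G0"
      using that by (intro ideal_gen_mono) (auto simp: G0_def A_def)
    thus ?thesis
      using F[of a] that by (auto simp: A_def ideal_sum_def)
  qed
  ultimately show thesis
    using that[OF G0] red_at_of_monomials[OF C] by blast
qed

lemma minimal_reduction_finite_gen:
  fixes J :: "('v::finite, 'a::comm_ring_1) mpoly set"
  assumes C: "is_subring C" and J: "is_ideal C J" and M: "minimal_reduction C J Q"
  obtains G where "finite G" "G \<subseteq> {p \<in> PR C. homog 1 p}" "Q = ideal_gen C G"
proof -
  obtain G N where G: "G \<subseteq> {p \<in> PR C. homog 1 p}" "Q = ideal_gen C G"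
    and N: "red_at C J Q N"
    using M unfolding minimal_reduction_def is_reduction_def by blast
  obtain G0 where G0: "G0 \<subseteq> G" "finite G0" "\<And>n. N \<le> n \<Longrightarrow> red_at C J (ideal_gen C G0) n"
    using red_at_finite_generators[OF C _ J] G N by blast
  have "is_reduction C J (ideal_gen C G0)"
    unfolding is_reduction_def using G0 G(1) by blast
  moreover have "ideal_gen C G0 \<subseteq> Q"
    unfolding G(2) using G0(1) by (rule ideal_gen_mono)
  ultimately have "ideal_gen C G0 = Q"
    using M unfolding minimal_reduction_def by blast
  thus ?thesis
    using that G0 G(1) by blast
qed

lemma is_ideal_linear_part_in_span:
  assumes C: "is_subring C"
  shows "is_ideal C {m \<in> PR C. homog_comp 0 m = 0 \<and> homog_comp 1 m \<in> span_mp C e B}"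
    (is "is_ideal C ?Y")
  unfolding is_ideal_def
proof (intro conjI ballI)
  show "?Y \<subseteq> PR C"
    by blast
  show "0 \<in> ?Y"
    by (simp add: PR_0[OF C] span_mp_0[OF C] homog_comp_def)
  show "f + g \<in> ?Y" if "f \<in> ?Y" "g \<in> ?Y" for f g
    using that by (simp add: homog_comp_add PR_add[OF C] span_mp_add[OF C])
  show "r * f \<in> ?Y" if "f \<in> ?Y" "r \<in> PR C" for f r
  proof -
    have f: "f \<in> PR C" "homog_comp 0 f = 0" "homog_comp 1 f \<in> span_mp C e B"
      using that(1) by auto
    have r0: "Poly_Mapping.lookup r 0 \<in> C"
      using that(2) by (rule PR_lookup)
    have "homog_comp 0 (r * f) = 0"
      unfolding homog_comp_mult by (intro sum.neutral ballI) (auto simp: f(2))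
    moreover have "(if i + k = 1 then homog_comp i r * homog_comp k f else 0) \<in> span_mp C e B" for i k
    proof -
      consider "i = 0" "k = 1" | "i = 1" "k = 0" | "i + k \<noteq> 1"
        by arith
      thus ?thesis
        using span_mp_smult_mp[OF C r0 f(3)] span_mp_0[OF C] f(2)
        by cases (simp_all add: homog_comp_0_eq smult_mp_def)
    qed
    hence "homog_comp 1 (r * f) \<in> span_mp C e B"
      unfolding homog_comp_mult by (intro span_mp_sum[OF C])
    ultimately show ?thesis
      using that f(1) by (simp add: PR_mult[OF C])
  qed
qed

lemma homog_1_in_span_mp:
  fixes e :: "'i \<Rightarrow> ('v, 'a::comm_ring_1) mpoly"
  assumes C: "is_subring C" and B: "finite B" and e: "e ` B \<subseteq> {p \<in> PR C. homog 1 p}"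
    and q: "q \<in> ideal_gen C (e ` B)" "homog 1 q"
  shows "q \<in> span_mp C e B"
proof -
  let ?Y = "{m \<in> PR C. homog_comp 0 m = 0 \<and> homog_comp 1 m \<in> span_mp C e B}"
  have "e ` B \<subseteq> ?Y"
    using e span_mp_generator[OF C B] homog_comp_homog by fastforce
  hence "ideal_gen C (e ` B) \<subseteq> ?Y"
    by (rule ideal_gen_least[OF is_ideal_linear_part_in_span[OF C]])
  thus ?thesis
    using q homog_comp_homog[OF q(2)] by auto
qed

section \<open>The local ring k[t]_(t) and specialisation at t = 0\<close>

text \<open>Outside \<^const>\<open>loc_t\<close>, \<open>eval_t0\<close> is an unspecified value of the \<open>SOME\<close>.\<close>

definition eval_t0 :: "'k::field poly fract \<Rightarrow> 'k" where
  "eval_t0 x = (SOME c. \<exists>p q. x = Fract p q \<and> poly q 0 \<noteq> 0 \<and> c = poly p 0 / poly q 0)"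

definition max_t :: "'k::field poly fract set" where
  "max_t = {c \<in> loc_t. eval_t0 c = 0}"

definition const_t :: "'k::field \<Rightarrow> 'k poly fract" where
  "const_t c = Fract [:c:] 1"

lemma eval_t0_Fract:
  assumes "poly q 0 \<noteq> 0"
  shows "eval_t0 (Fract p q) = poly p 0 / poly q 0"
proof -
  have "c = poly p 0 / poly q 0"
    if "Fract p q = Fract p' q'" "poly q' 0 \<noteq> 0" "c = poly p' 0 / poly q' 0" for c p' q'
  proof -
    have "q \<noteq> 0" "q' \<noteq> 0"
      using that(2) assms by auto
    hence "p * q' = p' * q"
      using that(1) by (simp add: eq_fract)
    hence "poly p 0 * poly q' 0 = poly p' 0 * poly q 0"
      by (metis poly_mult)
    hence "(c * poly q 0) * poly q' 0 = poly p 0 * poly q' 0"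
      using that(2,3) by (simp add: field_simps)
    thus ?thesis
      using that(2) assms by (simp add: field_simps)
  qed
  thus ?thesis
    unfolding eval_t0_def using assms by (intro some_equality) blast+
qed

lemma loc_tI: "poly q 0 \<noteq> 0 \<Longrightarrow> Fract p q \<in> loc_t"
  unfolding loc_t_def by blast

lemma loc_tE:
  assumes "x \<in> loc_t"
  obtains p q where "x = Fract p q" "poly q 0 \<noteq> 0"
  using assms unfolding loc_t_def by blast

lemma loc_t_0 [simp]: "0 \<in> loc_t" and eval_t0_0 [simp]: "eval_t0 0 = 0"
  by (simp_all add: Zero_fract_def loc_tI eval_t0_Fract)

lemma loc_t_1 [simp]: "1 \<in> loc_t" and eval_t0_1 [simp]: "eval_t0 1 = 1"
  by (simp_all add: One_fract_def loc_tI eval_t0_Fract)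

lemma loc_t_add: "x \<in> loc_t \<Longrightarrow> y \<in> loc_t \<Longrightarrow> x + y \<in> loc_t"
  and eval_t0_add: "x \<in> loc_t \<Longrightarrow> y \<in> loc_t \<Longrightarrow> eval_t0 (x + y) = eval_t0 x + eval_t0 y"
proof -
  assume "x \<in> loc_t" "y \<in> loc_t"
  then obtain p q p' q' where xy: "x = Fract p q" "poly q 0 \<noteq> 0" "y = Fract p' q'" "poly q' 0 \<noteq> 0"
    by (metis loc_tE)
  moreover have "q \<noteq> 0" "q' \<noteq> 0"
    using xy by auto
  ultimately show "x + y \<in> loc_t" "eval_t0 (x + y) = eval_t0 x + eval_t0 y"
    by (auto intro!: loc_tI simp: eval_t0_Fract field_simps)
qed

lemma loc_t_mult: "x \<in> loc_t \<Longrightarrow> y \<in> loc_t \<Longrightarrow> x * y \<in> loc_t"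
  and eval_t0_mult: "x \<in> loc_t \<Longrightarrow> y \<in> loc_t \<Longrightarrow> eval_t0 (x * y) = eval_t0 x * eval_t0 y"
  by (auto elim!: loc_tE intro!: loc_tI simp: eval_t0_Fract)

lemma loc_t_uminus: "x \<in> loc_t \<Longrightarrow> - x \<in> loc_t"
  and eval_t0_uminus: "x \<in> loc_t \<Longrightarrow> eval_t0 (- x) = - eval_t0 x"
  by (auto elim!: loc_tE intro!: loc_tI simp: eval_t0_Fract)

lemma loc_t_diff: "x \<in> loc_t \<Longrightarrow> y \<in> loc_t \<Longrightarrow> x - y \<in> loc_t"
  by (metis diff_conv_add_uminus loc_t_add loc_t_uminus)

lemma eval_t0_diff: "x \<in> loc_t \<Longrightarrow> y \<in> loc_t \<Longrightarrow> eval_t0 (x - y) = eval_t0 x - eval_t0 y"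
  by (metis diff_conv_add_uminus eval_t0_add eval_t0_uminus loc_t_uminus)

lemma is_subring_loc_t: "is_subring loc_t"
  by (simp add: is_subring_def loc_t_add loc_t_mult loc_t_uminus)

lemma inverse_in_loc_t:
  assumes "x \<in> loc_t" "eval_t0 x \<noteq> 0"
  shows "inverse x \<in> loc_t"
proof -
  obtain p q where "x = Fract p q" "poly q 0 \<noteq> 0"
    using assms(1) by (rule loc_tE)
  moreover from calculation have "poly p 0 \<noteq> 0"
    using assms(2) by (simp add: eval_t0_Fract)
  ultimately show ?thesis
    by (simp add: loc_tI)
qed

lemma const_t_in_loc_t [simp]: "const_t c \<in> loc_t"
  and eval_t0_const_t [simp]: "eval_t0 (const_t c) = c"
  by (simp_all add: const_t_def loc_tI eval_t0_Fract)

lemma const_t_0 [simp]: "const_t 0 = 0"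
  by (simp add: const_t_def Zero_fract_def)

lemma const_t_add: "const_t (c + d) = const_t c + const_t d"
  by (simp add: const_t_def)

lemma const_t_mult: "const_t (c * d) = const_t c * const_t d"
  by (simp add: const_t_def mult.commute[of c d])

lemma max_t_iff: "c \<in> max_t \<longleftrightarrow> c \<in> loc_t \<and> eval_t0 c = 0"
  by (simp add: max_t_def)

lemma max_t_add: "c \<in> max_t \<Longrightarrow> d \<in> max_t \<Longrightarrow> c + d \<in> max_t"
  by (simp add: max_t_iff loc_t_add eval_t0_add)

lemma max_t_mult: "c \<in> loc_t \<Longrightarrow> d \<in> max_t \<Longrightarrow> c * d \<in> max_t"
  by (simp add: max_t_iff loc_t_mult eval_t0_mult)

lemma const_t_eval_t0_diff: "c \<in> loc_t \<Longrightarrow> const_t (eval_t0 c) - c \<in> max_t"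
  by (simp add: max_t_iff loc_t_diff eval_t0_diff)

lemma solve_max_t:
  assumes c: "c \<in> max_t" and p: "p = r + smult_mp c p"
  obtains y where "y \<in> loc_t" "p = smult_mp y r"
proof
  define y where "y = inverse (1 - c)"
  have "1 - c \<in> loc_t" "eval_t0 (1 - c) = 1"
    using c by (auto simp: max_t_iff loc_t_diff eval_t0_diff)
  thus "y \<in> loc_t"
    unfolding y_def by (intro inverse_in_loc_t) auto
  have "1 - c \<noteq> 0"
    using \<open>eval_t0 (1 - c) = 1\<close> by auto
  have "smult_mp (1 - c) p = r"
    using arg_cong[OF p, of "\<lambda>x. x - smult_mp c p"] by (simp add: smult_mp_diff_left)
  hence "smult_mp y r = smult_mp (y * (1 - c)) p"
    by auto
  thus "p = smult_mp y r"
    using \<open>1 - c \<noteq> 0\<close> by (simp add: y_def)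
qed

definition at_t0 :: "('v, 'k::field poly fract) mpoly \<Rightarrow> ('v, 'k) mpoly" where
  "at_t0 p = Poly_Mapping.map eval_t0 p"

definition const_t_mp :: "('v, 'k::field) mpoly \<Rightarrow> ('v, 'k poly fract) mpoly" where
  "const_t_mp p = Poly_Mapping.map const_t p"

lemma lookup_at_t0 [simp]: "Poly_Mapping.lookup (at_t0 p) a = eval_t0 (Poly_Mapping.lookup p a)"
  unfolding at_t0_def by transfer (simp add: when_def)

lemma lookup_const_t_mp [simp]: "Poly_Mapping.lookup (const_t_mp p) a = const_t (Poly_Mapping.lookup p a)"
  unfolding const_t_mp_def by transfer (simp add: when_def)

lemma const_t_mp_PR: "const_t_mp p \<in> PR loc_t"
  by (simp add: PR_def)

lemma at_t0_const_t_mp [simp]: "at_t0 (const_t_mp p) = p"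
  by (rule poly_mapping_eqI) simp

lemma at_t0_0 [simp]: "at_t0 0 = 0"
  by (rule poly_mapping_eqI) simp

lemma at_t0_add: "p \<in> PR loc_t \<Longrightarrow> q \<in> PR loc_t \<Longrightarrow> at_t0 (p + q) = at_t0 p + at_t0 q"
  by (rule poly_mapping_eqI) (simp add: lookup_add eval_t0_add PR_lookup)

lemma at_t0_diff: "p \<in> PR loc_t \<Longrightarrow> q \<in> PR loc_t \<Longrightarrow> at_t0 (p - q) = at_t0 p - at_t0 q"
  by (rule poly_mapping_eqI) (simp add: lookup_minus eval_t0_diff PR_lookup)

lemma at_t0_sum: "(\<And>i. i \<in> A \<Longrightarrow> f i \<in> PR loc_t) \<Longrightarrow> at_t0 (sum f A) = (\<Sum>i\<in>A. at_t0 (f i))"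
  by (induct A rule: infinite_finite_induct) (simp_all add: at_t0_add PR_sum is_subring_loc_t)

lemma at_t0_single: "c \<in> loc_t \<Longrightarrow> at_t0 (Poly_Mapping.single a c) = Poly_Mapping.single a (eval_t0 c)"
  by (rule poly_mapping_eqI) (simp add: lookup_single when_def)

lemma at_t0_smult_mp: "c \<in> loc_t \<Longrightarrow> p \<in> PR loc_t \<Longrightarrow> at_t0 (smult_mp c p) = smult_mp (eval_t0 c) (at_t0 p)"
  by (rule poly_mapping_eqI) (simp add: eval_t0_mult PR_lookup)

lemma at_t0_mult:
  assumes p: "p \<in> PR loc_t" and q: "q \<in> PR loc_t"
  shows "at_t0 (p * q) = at_t0 p * at_t0 q"
proof -
  let ?P = "Poly_Mapping.keys p" and ?Q = "Poly_Mapping.keys q"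
  have keys: "Poly_Mapping.keys (at_t0 r) \<subseteq> Poly_Mapping.keys r" for r
    by (auto simp: in_keys_iff)
  have "at_t0 (p * q) = at_t0 (\<Sum>a\<in>?P. \<Sum>b\<in>?Q.
      Poly_Mapping.single (a + b) (Poly_Mapping.lookup p a * Poly_Mapping.lookup q b))"
    by (subst mpoly_mult_expand[of ?P p ?Q q]) auto
  also have "\<dots> = (\<Sum>a\<in>?P. \<Sum>b\<in>?Q.
      Poly_Mapping.single (a + b) (eval_t0 (Poly_Mapping.lookup p a) * eval_t0 (Poly_Mapping.lookup q b)))"
    using p q by (simp add: at_t0_sum PR_sum PR_single is_subring_loc_t at_t0_single PR_lookup loc_t_mult eval_t0_mult)
  also have "\<dots> = at_t0 p * at_t0 q"
    by (subst mpoly_mult_expand[of ?P "at_t0 p" ?Q "at_t0 q"]) (auto simp: keys)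
  finally show ?thesis .
qed

lemma at_t0_homog_comp: "at_t0 (homog_comp n p) = homog_comp n (at_t0 p)"
  by (rule poly_mapping_eqI) (simp add: lookup_homog_comp)

lemma homog_at_t0: "homog n p \<Longrightarrow> homog n (at_t0 p)"
  unfolding homog_iff lookup_at_t0 by (metis eval_t0_0)

lemma homog_const_t_mp: "homog n p \<Longrightarrow> homog n (const_t_mp p)"
  unfolding homog_iff lookup_const_t_mp by (metis const_t_0)

lemma const_t_mp_0 [simp]: "const_t_mp 0 = 0"
  by (rule poly_mapping_eqI) simp

lemma const_t_mp_add: "const_t_mp (p + q) = const_t_mp p + const_t_mp q"
  by (rule poly_mapping_eqI) (simp add: lookup_add const_t_add)

lemma const_t_mp_sum: "const_t_mp (sum f A) = (\<Sum>i\<in>A. const_t_mp (f i))"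
  by (induct A rule: infinite_finite_induct) (simp_all add: const_t_mp_add)

lemma const_t_mp_smult_mp: "const_t_mp (smult_mp c p) = smult_mp (const_t c) (const_t_mp p)"
  by (rule poly_mapping_eqI) (simp add: const_t_mult)

lemma at_t0_eq_0_PR_max_t: "at_t0 p = 0 \<Longrightarrow> p \<in> PR loc_t \<Longrightarrow> p \<in> PR max_t"
proof (rule PR_I)
  fix a
  assume "at_t0 p = 0" "p \<in> PR loc_t"
  hence "eval_t0 (Poly_Mapping.lookup p a) = 0" "Poly_Mapping.lookup p a \<in> loc_t"
    by (metis lookup_at_t0 lookup_zero, simp add: PR_lookup)
  thus "Poly_Mapping.lookup p a \<in> max_t"
    by (simp add: max_t_iff)
qed

lemma is_ideal_at_t0:
  assumes J: "is_ideal loc_t J"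
  shows "is_ideal UNIV (at_t0 ` J)"
  unfolding is_ideal_def
proof (intro conjI ballI)
  have J_PR: "x \<in> J \<Longrightarrow> x \<in> PR loc_t" for x
    using ideal_PR[OF J] by blast
  show "at_t0 ` J \<subseteq> PR UNIV"
    by simp
  show "0 \<in> at_t0 ` J"
    using ideal_0[OF J] by (metis image_eqI at_t0_0)
  show "f + g \<in> at_t0 ` J" if "f \<in> at_t0 ` J" "g \<in> at_t0 ` J" for f g
    using that ideal_add[OF J] J_PR by (auto simp flip: at_t0_add)
  show "r * f \<in> at_t0 ` J" if "f \<in> at_t0 ` J" "r \<in> PR UNIV" for f r
  proof -
    from that obtain f' where "f = at_t0 f'" "f' \<in> J"
      by blast
    moreover have "const_t_mp r * f' \<in> J"
      using calculation by (intro ideal_mult[OF J] const_t_mp_PR)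
    ultimately show ?thesis
      using J_PR by (metis at_t0_mult const_t_mp_PR at_t0_const_t_mp image_eqI)
  qed
qed

lemma at_t0_ideal_gen:
  assumes G: "G \<subseteq> PR loc_t"
  shows "at_t0 ` ideal_gen loc_t G = ideal_gen UNIV (at_t0 ` G)"
proof
  let ?J = "{p \<in> PR loc_t. at_t0 p \<in> ideal_gen UNIV (at_t0 ` G)}"
  have U: "is_ideal UNIV (ideal_gen UNIV (at_t0 ` G))"
    by (rule ideal_gen_UNIV_is_ideal)
  have "is_ideal loc_t ?J"
    unfolding is_ideal_def[of loc_t ?J]
  proof (intro conjI ballI)
    show "?J \<subseteq> PR loc_t"
      by blast
    show "0 \<in> ?J"
      using U by (simp add: PR_0 is_subring_loc_t ideal_0)
    show "f + g \<in> ?J" if "f \<in> ?J" "g \<in> ?J" for f g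
      using that U by (simp add: PR_add is_subring_loc_t at_t0_add ideal_add)
    show "r * f \<in> ?J" if "f \<in> ?J" "r \<in> PR loc_t" for f r
      using that U by (simp add: PR_mult is_subring_loc_t at_t0_mult ideal_mult)
  qed
  moreover have "G \<subseteq> ?J"
    using G ideal_gen_subset[of "at_t0 ` G" UNIV] by auto
  ultimately have "ideal_gen loc_t G \<subseteq> ?J"
    by (rule ideal_gen_least)
  thus "at_t0 ` ideal_gen loc_t G \<subseteq> ideal_gen UNIV (at_t0 ` G)"
    by blast
next
  have "is_ideal UNIV (at_t0 ` ideal_gen loc_t G)"
    by (intro is_ideal_at_t0 ideal_gen_is_ideal[OF is_subring_loc_t G])
  moreover have "at_t0 ` G \<subseteq> at_t0 ` ideal_gen loc_t G"
    using ideal_gen_subset by blast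
  ultimately show "ideal_gen UNIV (at_t0 ` G) \<subseteq> at_t0 ` ideal_gen loc_t G"
    by (rule ideal_gen_least)
qed

section \<open>Nakayama's lemma over the local ring\<close>

lemma span_mp_max_t_solve:
  fixes e :: "'i \<Rightarrow> ('v, 'k::field poly fract) mpoly"
  assumes N: "is_ideal loc_t N" and "finite F" "a0 \<notin> F"
    and "e a0 \<in> ideal_sum N (span_mp max_t e (insert a0 F))"
  shows "e a0 \<in> ideal_sum N (span_mp loc_t e F)"
proof -
  obtain n s where ns: "e a0 = n + s" "n \<in> N" "s \<in> span_mp max_t e (insert a0 F)"
    using assms(4) by (auto simp: ideal_sum_def)
  then obtain c where c: "\<forall>g\<in>insert a0 F. c g \<in> max_t"
    and "s = (\<Sum>g\<in>insert a0 F. smult_mp (c g) (e g))"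
    by (auto elim: span_mpE)
  hence s: "s = smult_mp (c a0) (e a0) + (\<Sum>g\<in>F. smult_mp (c g) (e g))"
    using \<open>finite F\<close> \<open>a0 \<notin> F\<close> by simp
  have "e a0 = n + (smult_mp (c a0) (e a0) + (\<Sum>g\<in>F. smult_mp (c g) (e g)))"
    using ns(1) unfolding s .
  also have "\<dots> = (n + (\<Sum>g\<in>F. smult_mp (c g) (e g))) + smult_mp (c a0) (e a0)"
    by (simp add: ac_simps)
  finally obtain y where y: "y \<in> loc_t" "e a0 = smult_mp y (n + (\<Sum>g\<in>F. smult_mp (c g) (e g)))"
    using c solve_max_t by blast
  hence "e a0 = smult_mp y n + (\<Sum>g\<in>F. smult_mp (y * c g) (e g))"
    by (simp add: smult_mp_add_right smult_mp_sum_right)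
  moreover have "smult_mp y n \<in> N"
    using y(1) ns(2) by (rule ideal_smult_mp[OF is_subring_loc_t N])
  moreover have "(\<Sum>g\<in>F. smult_mp (y * c g) (e g)) \<in> span_mp loc_t e F"
    using c y(1) by (intro span_mpI) (simp add: max_t_iff loc_t_mult)
  ultimately show ?thesis
    by (auto simp: ideal_sum_def)
qed

lemma span_mp_max_t_eliminate:
  fixes e :: "'i \<Rightarrow> ('v, 'k::field poly fract) mpoly"
  assumes N: "is_ideal loc_t N" and "finite F" "a0 \<notin> F"
    and x: "x \<in> ideal_sum N (span_mp max_t e (insert a0 F))"
    and a0: "e a0 \<in> ideal_sum N (span_mp loc_t e F)"
  shows "x \<in> ideal_sum N (span_mp max_t e F)"
proof -
  obtain n s where ns: "x = n + s" "n \<in> N" "s \<in> span_mp max_t e (insert a0 F)"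
    using x by (auto simp: ideal_sum_def)
  then obtain c where c: "\<forall>g\<in>insert a0 F. c g \<in> max_t"
    and s: "s = (\<Sum>g\<in>insert a0 F. smult_mp (c g) (e g))"
    by (auto elim: span_mpE)
  obtain n' s' where ns': "e a0 = n' + s'" "n' \<in> N" "s' \<in> span_mp loc_t e F"
    using a0 by (auto simp: ideal_sum_def)
  then obtain d where d: "\<forall>g\<in>F. d g \<in> loc_t" and s': "s' = (\<Sum>g\<in>F. smult_mp (d g) (e g))"
    by (auto elim: span_mpE)
  have "x = n + smult_mp (c a0) (e a0) + (\<Sum>g\<in>F. smult_mp (c g) (e g))"
    using ns(1) s \<open>finite F\<close> \<open>a0 \<notin> F\<close> by (simp add: add.assoc)
  also have "smult_mp (c a0) (e a0) = smult_mp (c a0) n' + (\<Sum>g\<in>F. smult_mp (c a0 * d g) (e g))"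
    using ns'(1) s' by (simp add: smult_mp_add_right smult_mp_sum_right)
  finally have "x = (n + smult_mp (c a0) n') + (\<Sum>g\<in>F. smult_mp (c g + c a0 * d g) (e g))"
    by (simp add: smult_mp_add_left sum.distrib ac_simps)
  moreover have "n + smult_mp (c a0) n' \<in> N"
    using c ns(2) ns'(2) by (intro ideal_add[OF N] ideal_smult_mp[OF is_subring_loc_t N]) (auto simp: max_t_iff)
  moreover have "(\<Sum>g\<in>F. smult_mp (c g + c a0 * d g) (e g)) \<in> span_mp max_t e F"
    using c d by (intro span_mpI) (auto intro: max_t_add max_t_mult simp: mult.commute[of "c a0"])
  ultimately show ?thesis
    by (auto simp: ideal_sum_def)
qed

lemma nakayama_max_t:
  fixes e :: "'i \<Rightarrow> ('v, 'k::field poly fract) mpoly"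
  assumes "finite A" and N: "is_ideal loc_t N"
    and "\<And>a. a \<in> A \<Longrightarrow> e a \<in> ideal_sum N (span_mp max_t e A)"
  shows "e ` A \<subseteq> N"
  using assms(1,3)
proof (induction A rule: finite_induct)
  case empty
  thus ?case
    by simp
next
  case (insert a0 F)
  have a0: "e a0 \<in> ideal_sum N (span_mp loc_t e F)"
    using insert.prems[of a0] insert.hyps by (intro span_mp_max_t_solve[OF N]) auto
  have "e ` F \<subseteq> N"
  proof (rule insert.IH)
    fix a
    assume "a \<in> F"
    thus "e a \<in> ideal_sum N (span_mp max_t e F)"
      using insert.prems[of a] by (intro span_mp_max_t_eliminate[OF N insert.hyps(1,2) _ a0]) simp
  qed
  moreover from this have "span_mp loc_t e F \<subseteq> N"
    by (rule span_mp_subset_ideal[OF is_subring_loc_t N])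
  hence "e a0 \<in> N"
    using a0 ideal_add[OF N] by (auto simp: ideal_sum_def)
  ultimately show ?case
    by simp
qed

lemma homog_lift_at_t0:
  assumes Q: "homog_ideal loc_t Q" and l: "homog n l" "l \<in> at_t0 ` Q"
  obtains q where "q \<in> Q" "homog n q" "at_t0 q = l"
proof -
  from l(2) obtain q where q: "q \<in> Q" "at_t0 q = l"
    by blast
  show thesis
  proof (rule that)
    show "homog_comp n q \<in> Q"
      using Q q(1) by (simp add: homog_ideal_def)
    show "homog n (homog_comp n q)"
      by (rule homog_homog_comp)
    show "at_t0 (homog_comp n q) = l"
      using q(2) l(1) by (simp add: at_t0_homog_comp homog_comp_homog)
  qed
qed

lemma monomial_mod_max_t:
  fixes N :: "('v::finite, 'k::field poly fract) mpoly set"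
  assumes N: "homog_ideal loc_t N" and a: "Poly_Mapping.single a 1 \<in> at_t0 ` N"
  shows "Poly_Mapping.single a 1 \<in>
    ideal_sum N (span_mp max_t (\<lambda>b. Poly_Mapping.single b 1) {b. mdeg b = mdeg a})"
proof -
  have homog_a: "homog (mdeg a) (Poly_Mapping.single a (1 :: 'c::comm_ring_1))"
    by (simp add: homog_def)
  then obtain m where m: "m \<in> N" "homog (mdeg a) m" "at_t0 m = Poly_Mapping.single a 1"
    using homog_lift_at_t0[OF N _ a] by blast
  have m_PR: "m \<in> PR loc_t"
    using m(1) N by (auto simp: homog_ideal_def is_ideal_def)
  have a_PR: "Poly_Mapping.single a 1 \<in> PR loc_t"
    by (simp add: PR_single is_subring_loc_t)
  have "at_t0 (Poly_Mapping.single a 1 - m) = 0"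
    using m(3) by (simp add: at_t0_diff m_PR a_PR at_t0_single)
  hence "Poly_Mapping.single a 1 - m \<in> PR max_t"
    using PR_diff[OF is_subring_loc_t a_PR m_PR] by (rule at_t0_eq_0_PR_max_t)
  moreover have "homog (mdeg a) (Poly_Mapping.single a 1 - m)"
    using homog_a m(2) by (rule homog_diff)
  ultimately have "Poly_Mapping.single a 1 - m \<in> span_mp max_t (\<lambda>b. Poly_Mapping.single b 1) {b. mdeg b = mdeg a}"
    by (rule homog_in_span_monomials)
  thus ?thesis
    using m(1) unfolding ideal_sum_def by force
qed

lemma ideal_gen_const_t_mp_eq:
  fixes H :: "('v::finite, 'k::field) mpoly set"
  assumes H: "finite H" "H \<subseteq> {p. homog 1 p}"
    and Q: "homog_ideal loc_t Q" "Q \<subseteq> ideal_gen loc_t (const_t_mp ` H)" "H \<subseteq> at_t0 ` Q"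
  shows "Q = ideal_gen loc_t (const_t_mp ` H)"
proof -
  have Q_ideal: "is_ideal loc_t Q"
    using Q(1) by (simp add: homog_ideal_def)
  have lin: "const_t_mp ` H \<subseteq> {p \<in> PR loc_t. homog 1 p}"
    using H(2) const_t_mp_PR homog_const_t_mp by blast
  have "const_t_mp ` H \<subseteq> Q"
  proof (rule nakayama_max_t[OF H(1) Q_ideal])
    fix l
    assume l: "l \<in> H"
    hence "homog 1 l" "l \<in> at_t0 ` Q"
      using H(2) Q(3) by auto
    then obtain q where q: "q \<in> Q" "homog 1 q" "at_t0 q = l"
      by (rule homog_lift_at_t0[OF Q(1)])
    have "q \<in> span_mp loc_t const_t_mp H"
      using q(1,2) Q(2) by (intro homog_1_in_span_mp[OF is_subring_loc_t H(1) lin]) auto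
    then obtain c where c: "\<forall>g\<in>H. c g \<in> loc_t" "q = (\<Sum>g\<in>H. smult_mp (c g) (const_t_mp g))"
      by (rule span_mpE)
    have "l = (\<Sum>g\<in>H. smult_mp (eval_t0 (c g)) g)"
      using c q(3) by (simp add: at_t0_sum PR_smult_mp is_subring_loc_t const_t_mp_PR at_t0_smult_mp)
    hence "const_t_mp l = q + (\<Sum>g\<in>H. smult_mp (const_t (eval_t0 (c g)) - c g) (const_t_mp g))"
      using c(2) by (simp add: const_t_mp_sum const_t_mp_smult_mp smult_mp_diff_left sum_subtractf)
    moreover have "(\<Sum>g\<in>H. smult_mp (const_t (eval_t0 (c g)) - c g) (const_t_mp g)) \<in> span_mp max_t const_t_mp H"
      using c(1) const_t_eval_t0_diff by (intro span_mpI) auto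
    ultimately show "const_t_mp l \<in> ideal_sum Q (span_mp max_t const_t_mp H)"
      using q(1) by (auto simp: ideal_sum_def)
  qed
  hence "ideal_gen loc_t (const_t_mp ` H) \<subseteq> Q"
    by (rule ideal_gen_least[OF Q_ideal])
  thus ?thesis
    using Q(2) by blast
qed

section \<open>Reductions of S/J and of R/J(0)\<close>

lemma at_t0_ideal_sum:
  assumes "Q \<subseteq> PR loc_t" "J \<subseteq> PR loc_t"
  shows "at_t0 ` ideal_sum Q J = ideal_sum (at_t0 ` Q) (at_t0 ` J)"
  using assms unfolding ideal_sum_def by (force simp: at_t0_add)

lemma red_at_at_t0:
  fixes Q J :: "('v, 'k::field poly fract) mpoly set"
  assumes "Q \<subseteq> PR loc_t" "J \<subseteq> PR loc_t" "red_at loc_t J Q n"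
  shows "red_at UNIV (at_t0 ` J) (at_t0 ` Q) n"
  unfolding red_at_def
proof (intro ballI impI)
  fix f :: "('v, 'k) mpoly"
  assume "homog n f"
  hence "const_t_mp f \<in> ideal_sum Q J"
    using assms(3) const_t_mp_PR homog_const_t_mp by (auto simp: red_at_def)
  hence "at_t0 (const_t_mp f) \<in> at_t0 ` ideal_sum Q J"
    by (rule imageI)
  thus "f \<in> ideal_sum (at_t0 ` Q) (at_t0 ` J)"
    using at_t0_ideal_sum[OF assms(1,2)] by simp
qed

lemma red_at_of_red_at_at_t0:
  fixes Q J :: "('v::finite, 'k::field poly fract) mpoly set"
  assumes Q: "homog_ideal loc_t Q" and J: "homog_ideal loc_t J"
    and red: "red_at UNIV (at_t0 ` J) (at_t0 ` Q) n"
  shows "red_at loc_t J Q n"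
proof -
  let ?N = "ideal_sum Q J" and ?A = "{a :: 'v \<Rightarrow>\<^sub>0 nat. mdeg a = n}"
  have N: "homog_ideal loc_t ?N"
    by (rule homog_ideal_ideal_sum[OF is_subring_loc_t Q J])
  hence N_ideal: "is_ideal loc_t ?N"
    by (simp add: homog_ideal_def)
  have "Poly_Mapping.single a 1 \<in> ideal_sum ?N (span_mp max_t (\<lambda>b. Poly_Mapping.single b 1) ?A)"
    if "a \<in> ?A" for a
  proof -
    have "Poly_Mapping.single a 1 \<in> ideal_sum (at_t0 ` Q) (at_t0 ` J)"
      using that red by (intro red_at_monomial[OF is_subring_UNIV]) simp
    hence "Poly_Mapping.single a 1 \<in> at_t0 ` ?N"
      using Q J by (simp add: at_t0_ideal_sum homog_ideal_def is_ideal_def)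
    hence "Poly_Mapping.single a 1 \<in>
        ideal_sum ?N (span_mp max_t (\<lambda>b. Poly_Mapping.single b 1) {b. mdeg b = mdeg a})"
      by (rule monomial_mod_max_t[OF N])
    thus ?thesis
      using that by simp
  qed
  hence "(\<lambda>b. Poly_Mapping.single b 1) ` ?A \<subseteq> ?N"
    by (intro nakayama_max_t[OF finite_mdeg_eq N_ideal])
  thus ?thesis
    by (intro red_at_of_monomials[OF is_subring_loc_t N_ideal, of n]) auto
qed

lemma red_at_at_t0_iff:
  fixes Q J :: "('v::finite, 'k::field poly fract) mpoly set"
  assumes Q: "homog_ideal loc_t Q" and J: "homog_ideal loc_t J"
  shows "red_at loc_t J Q n \<longleftrightarrow> red_at UNIV (at_t0 ` J) (at_t0 ` Q) n"
  using red_at_at_t0 red_at_of_red_at_at_t0[OF Q J] Q J by (auto simp: homog_ideal_def is_ideal_def)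

lemma homog_ideal_reduction:
  "is_subring C \<Longrightarrow> is_reduction C J Q \<Longrightarrow> homog_ideal C Q"
  unfolding is_reduction_def using homog_ideal_ideal_gen_linear by blast

lemma is_reduction_at_t0_iff:
  fixes J :: "('v::finite, 'k::field poly fract) mpoly set"
  assumes J: "homog_ideal loc_t J" and G: "G \<subseteq> {p \<in> PR loc_t. homog 1 p}"
  shows "is_reduction loc_t J (ideal_gen loc_t G) \<longleftrightarrow>
    is_reduction UNIV (at_t0 ` J) (at_t0 ` ideal_gen loc_t G)"
proof -
  have Q: "homog_ideal loc_t (ideal_gen loc_t G)"
    by (rule homog_ideal_ideal_gen_linear[OF is_subring_loc_t G])
  have "at_t0 ` ideal_gen loc_t G = ideal_gen UNIV (at_t0 ` G)"
    using G by (intro at_t0_ideal_gen) blast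
  moreover have "at_t0 ` G \<subseteq> {p \<in> PR UNIV. homog 1 p}"
    using G homog_at_t0 by auto
  ultimately show ?thesis
    unfolding is_reduction_def using red_at_at_t0_iff[OF Q J] G by auto
qed

lemma lift_homog_generators:
  assumes Q: "homog_ideal loc_t Q" and H: "H \<subseteq> {p. homog n p}" "H \<subseteq> at_t0 ` Q"
  obtains G where "G \<subseteq> Q" "G \<subseteq> {p \<in> PR loc_t. homog n p}" "at_t0 ` G = H"
proof -
  have "\<exists>q. q \<in> Q \<and> homog n q \<and> at_t0 q = l" if "l \<in> H" for l
    using homog_lift_at_t0[OF Q, of n l] that H by blast
  then obtain lift where lift: "\<And>l. l \<in> H \<Longrightarrow> lift l \<in> Q \<and> homog n (lift l) \<and> at_t0 (lift l) = l"
    by metis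
  have "lift ` H \<subseteq> PR loc_t"
    using lift Q by (auto simp: homog_ideal_def is_ideal_def)
  moreover have "at_t0 ` lift ` H = H"
    using lift by force
  ultimately show thesis
    using that[of "lift ` H"] lift by blast
qed

lemma minimal_reduction_at_t0:
  fixes J :: "('v::finite, 'k::field poly fract) mpoly set"
  assumes J: "homog_ideal loc_t J" and M: "minimal_reduction loc_t J Q"
  shows "minimal_reduction UNIV (at_t0 ` J) (at_t0 ` Q)"
proof -
  obtain G where G: "G \<subseteq> {p \<in> PR loc_t. homog 1 p}" "Q = ideal_gen loc_t G"
    using M by (auto simp: minimal_reduction_def is_reduction_def)
  have Q: "homog_ideal loc_t Q"
    unfolding G(2) by (rule homog_ideal_ideal_gen_linear[OF is_subring_loc_t G(1)])
  have "is_reduction UNIV (at_t0 ` J) (at_t0 ` Q)"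
    using M is_reduction_at_t0_iff[OF J G(1)] G(2) by (simp add: minimal_reduction_def)
  moreover have "P = at_t0 ` Q" if P: "is_reduction UNIV (at_t0 ` J) P" "P \<subseteq> at_t0 ` Q" for P
  proof -
    obtain H where H: "H \<subseteq> {p. homog 1 p}" "P = ideal_gen UNIV H"
      using P(1) by (auto simp: is_reduction_def)
    have "H \<subseteq> at_t0 ` Q"
      using H(2) P(2) ideal_gen_subset by blast
    with Q H(1) obtain G' where G': "G' \<subseteq> Q" "G' \<subseteq> {p \<in> PR loc_t. homog 1 p}" "at_t0 ` G' = H"
      by (rule lift_homog_generators)
    hence "at_t0 ` ideal_gen loc_t G' = P"
      using at_t0_ideal_gen[of G'] H(2) by auto
    hence "is_reduction loc_t J (ideal_gen loc_t G')"
      using is_reduction_at_t0_iff[OF J G'(2)] P(1) by simp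
    moreover have "ideal_gen loc_t G' \<subseteq> Q"
      using G'(1) Q by (intro ideal_gen_least) (auto simp: homog_ideal_def)
    ultimately have "ideal_gen loc_t G' = Q"
      using M by (auto simp: minimal_reduction_def)
    thus ?thesis
      using \<open>at_t0 ` ideal_gen loc_t G' = P\<close> by simp
  qed
  ultimately show ?thesis
    by (simp add: minimal_reduction_def)
qed

lemma minimal_reduction_lift_at_t0:
  fixes J :: "('v::finite, 'k::field poly fract) mpoly set"
  assumes J: "homog_ideal loc_t J" and M: "minimal_reduction UNIV (at_t0 ` J) P"
  obtains Q where "minimal_reduction loc_t J Q" "at_t0 ` Q = P"
proof -
  have "is_ideal UNIV (at_t0 ` J)"
    using J by (simp add: homog_ideal_def is_ideal_at_t0)
  then obtain H where H: "finite H" "H \<subseteq> {p \<in> PR UNIV. homog 1 p}" "P = ideal_gen UNIV H"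
    using M by (rule minimal_reduction_finite_gen[OF is_subring_UNIV])
  let ?G = "const_t_mp ` H"
  let ?Q = "ideal_gen loc_t ?G"
  have G: "?G \<subseteq> {p \<in> PR loc_t. homog 1 p}"
    using H(2) const_t_mp_PR homog_const_t_mp by auto
  have Q_P: "at_t0 ` ?Q = P"
    using at_t0_ideal_gen[of ?G] G H(3) by (auto simp: image_image)
  have "is_reduction loc_t J ?Q"
    using is_reduction_at_t0_iff[OF J G] Q_P M by (simp add: minimal_reduction_def)
  moreover have "Q' = ?Q" if Q': "is_reduction loc_t J Q'" "Q' \<subseteq> ?Q" for Q'
  proof -
    obtain G' where G': "G' \<subseteq> {p \<in> PR loc_t. homog 1 p}" "Q' = ideal_gen loc_t G'"
      using Q'(1) by (auto simp: is_reduction_def)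
    have "is_reduction UNIV (at_t0 ` J) (at_t0 ` Q')" "at_t0 ` Q' \<subseteq> P"
      using is_reduction_at_t0_iff[OF J G'(1)] Q' G'(2) Q_P by auto
    hence "at_t0 ` Q' = P"
      using M by (simp add: minimal_reduction_def)
    hence "H \<subseteq> at_t0 ` Q'"
      using H(3) ideal_gen_subset by blast
    thus ?thesis
      using H(1,2) homog_ideal_reduction[OF is_subring_loc_t Q'(1)] Q'(2)
      by (intro ideal_gen_const_t_mp_eq) auto
  qed
  ultimately have "minimal_reduction loc_t J ?Q"
    by (auto simp: minimal_reduction_def)
  thus ?thesis
    using that Q_P by blast
qed

lemma red_num_at_t0:
  fixes J :: "('v::finite, 'k::field poly fract) mpoly set"
  assumes J: "homog_ideal loc_t J"
  shows "red_num UNIV (at_t0 ` J) = red_num loc_t J"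
proof -
  have same_num: "red_num_Q UNIV (at_t0 ` J) (at_t0 ` Q) = red_num_Q loc_t J Q"
    if "minimal_reduction loc_t J Q" for Q
  proof -
    have "homog_ideal loc_t Q"
      using that homog_ideal_reduction[OF is_subring_loc_t] by (auto simp: minimal_reduction_def)
    thus ?thesis
      by (simp add: red_num_Q_def red_at_at_t0_iff[OF _ J])
  qed
  have "{red_num_Q UNIV (at_t0 ` J) P |P. minimal_reduction UNIV (at_t0 ` J) P} =
      {red_num_Q loc_t J Q |Q. minimal_reduction loc_t J Q}"
  proof (intro equalityI subsetI)
    fix x
    assume "x \<in> {red_num_Q UNIV (at_t0 ` J) P |P. minimal_reduction UNIV (at_t0 ` J) P}"
    then obtain P where x: "x = red_num_Q UNIV (at_t0 ` J) P" and P: "minimal_reduction UNIV (at_t0 ` J) P"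
      by blast
    obtain Q where Q: "minimal_reduction loc_t J Q" "at_t0 ` Q = P"
      using minimal_reduction_lift_at_t0[OF J P] .
    hence "x = red_num_Q loc_t J Q"
      using x same_num[OF Q(1)] by simp
    thus "x \<in> {red_num_Q loc_t J Q |Q. minimal_reduction loc_t J Q}"
      using Q(1) by blast
  next
    fix x
    assume "x \<in> {red_num_Q loc_t J Q |Q. minimal_reduction loc_t J Q}"
    then obtain Q where x: "x = red_num_Q loc_t J Q" and Q: "minimal_reduction loc_t J Q"
      by blast
    hence "x = red_num_Q UNIV (at_t0 ` J) (at_t0 ` Q)"
      using same_num by simp
    moreover have "minimal_reduction UNIV (at_t0 ` J) (at_t0 ` Q)"
      using Q by (rule minimal_reduction_at_t0[OF J])
    ultimately show "x \<in> {red_num_Q UNIV (at_t0 ` J) P |P. minimal_reduction UNIV (at_t0 ` J) P}"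
      by blast
  qed
  thus ?thesis
    by (simp add: red_num_def)
qed

section \<open>The ideal I~\<close>

lemma wt_le_bw: "a \<in> Poly_Mapping.keys g \<Longrightarrow> wt w a \<le> bw w g"
  unfolding bw_def by (rule Max_ge) auto

lemma lookup_hstar:
  "Poly_Mapping.lookup (hstar w g) a =
     (if a \<in> Poly_Mapping.keys g
      then Fract (monom (Poly_Mapping.lookup g a) (nat (bw w g - wt w a))) 1 else 0)"
proof -
  have "Poly_Mapping.lookup (hstar w g) a = (\<Sum>x\<in>Poly_Mapping.keys g.
      if x = a then Fract (monom (Poly_Mapping.lookup g x) (nat (bw w g - wt w x))) 1 else 0)"
    unfolding hstar_def lookup_sum lookup_single by (rule sum.cong) (auto simp: when_def)
  thus ?thesis
    by simp
qed

lemma lookup_init_form: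
  "Poly_Mapping.lookup (init_form w g) a = (if wt w a = bw w g then Poly_Mapping.lookup g a else 0)"
proof -
  have "Poly_Mapping.lookup (init_form w g) a = (\<Sum>x\<in>{a \<in> Poly_Mapping.keys g. wt w a = bw w g}.
      if x = a then Poly_Mapping.lookup g x else 0)"
    unfolding init_form_def lookup_sum lookup_single by (rule sum.cong) (auto simp: when_def)
  thus ?thesis
    by (auto simp: in_keys_iff)
qed

lemma hstar_PR: "hstar w g \<in> PR loc_t"
  by (rule PR_I) (auto simp: lookup_hstar intro!: loc_tI)

lemma at_t0_hstar: "at_t0 (hstar w g) = init_form w g"
proof (rule poly_mapping_eqI)
  fix a
  show "Poly_Mapping.lookup (at_t0 (hstar w g)) a = Poly_Mapping.lookup (init_form w g) a"
  proof (cases "a \<in> Poly_Mapping.keys g")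
    case True
    hence "Poly_Mapping.lookup (at_t0 (hstar w g)) a = Poly_Mapping.lookup g a * 0 ^ nat (bw w g - wt w a)"
      by (simp add: lookup_hstar eval_t0_Fract poly_monom)
    also have "\<dots> = (if wt w a = bw w g then Poly_Mapping.lookup g a else 0)"
      using wt_le_bw[OF True, of w] by auto
    finally show ?thesis
      by (simp add: lookup_init_form)
  next
    case False
    thus ?thesis
      by (simp add: lookup_hstar lookup_init_form in_keys_iff)
  qed
qed

lemma homog_comp_hstar:
  "homog_comp n (hstar w g) =
     smult_mp (Fract (monom 1 (nat (bw w g - bw w (homog_comp n g)))) 1) (hstar w (homog_comp n g))"
proof (rule poly_mapping_eqI)
  fix a
  let ?h = "homog_comp n g"
  show "Poly_Mapping.lookup (homog_comp n (hstar w g)) a =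
    Poly_Mapping.lookup (smult_mp (Fract (monom 1 (nat (bw w g - bw w ?h))) 1) (hstar w ?h)) a"
  proof (cases "a \<in> Poly_Mapping.keys ?h")
    case True
    hence a: "mdeg a = n" "a \<in> Poly_Mapping.keys g"
      by (simp_all add: keys_homog_comp)
    have "bw w ?h \<le> bw w g"
      unfolding bw_def using True by (intro Max_mono) (auto simp: keys_homog_comp)
    hence "nat (bw w g - bw w ?h) + nat (bw w ?h - wt w a) = nat (bw w g - wt w a)"
      using wt_le_bw[OF True, of w] by linarith
    thus ?thesis
      using True a by (simp add: lookup_homog_comp lookup_hstar mult_monom)
  next
    case False
    thus ?thesis
      by (auto simp: keys_homog_comp lookup_homog_comp lookup_hstar)
  qed
qed

lemma homog_ideal_tilde_ideal:
  assumes I: "homog_ideal UNIV I"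
  shows "homog_ideal loc_t (tilde_ideal w I)"
  unfolding tilde_ideal_def
proof (rule homog_ideal_ideal_gen[OF is_subring_loc_t])
  show G: "hstar w ` I \<subseteq> PR loc_t"
    using hstar_PR by blast
  fix g' n
  assume "g' \<in> hstar w ` I"
  then obtain g where g: "g \<in> I" "g' = hstar w g"
    by blast
  have "hstar w (homog_comp n g) \<in> ideal_gen loc_t (hstar w ` I)"
    using I g(1) ideal_gen_subset by (fastforce simp: homog_ideal_def)
  moreover have "Fract (monom 1 (nat (bw w g - bw w (homog_comp n g)))) 1 \<in> loc_t"
    by (rule loc_tI) simp
  ultimately show "homog_comp n g' \<in> ideal_gen loc_t (hstar w ` I)"
    unfolding g(2) homog_comp_hstar
    by (rule ideal_smult_mp[OF is_subring_loc_t ideal_gen_is_ideal[OF is_subring_loc_t G], rotated])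
qed

lemma ideal_gen_insert_0: "ideal_gen C (insert 0 G) = ideal_gen C G"
  by (auto simp: ideal_gen_def ideal_0)

lemma at_t0_tilde_ideal: "at_t0 ` tilde_ideal w I = init_ideal w I"
proof -
  let ?X = "{init_form w g |g. g \<in> I \<and> g \<noteq> 0}"
  have "at_t0 ` tilde_ideal w I = ideal_gen UNIV (at_t0 ` hstar w ` I)"
    unfolding tilde_ideal_def by (rule at_t0_ideal_gen) (use hstar_PR in blast)
  also have "at_t0 ` hstar w ` I = init_form w ` I"
    by (simp add: image_image at_t0_hstar)
  also have "ideal_gen UNIV (init_form w ` I) = ideal_gen UNIV ?X"
  proof
    have "init_form w ` I \<subseteq> insert 0 ?X"
    proof
      fix x
      assume "x \<in> init_form w ` I"
      then obtain g where "g \<in> I" "x = init_form w g"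
        by blast
      thus "x \<in> insert 0 ?X"
        by (cases "g = 0") (auto simp: init_form_def)
    qed
    hence "ideal_gen UNIV (init_form w ` I) \<subseteq> ideal_gen UNIV (insert 0 ?X)"
      by (rule ideal_gen_mono)
    thus "ideal_gen UNIV (init_form w ` I) \<subseteq> ideal_gen UNIV ?X"
      by (simp only: ideal_gen_insert_0)
    show "ideal_gen UNIV ?X \<subseteq> ideal_gen UNIV (init_form w ` I)"
      by (rule ideal_gen_mono) blast
  qed
  finally show ?thesis
    by (simp add: init_ideal_def)
qed

theorem lemma3p2:
  fixes w :: "'v::finite \<Rightarrow> int"
    and I :: "('v, 'k::field) mpoly set"
  assumes "infinite (UNIV :: 'k set)"
    and "homog_ideal UNIV I"
  shows "red_num UNIV (init_ideal w I) = red_num loc_t (tilde_ideal w I)"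
proof -
  have "homog_ideal loc_t (tilde_ideal w I)"
    using assms(2) by (rule homog_ideal_tilde_ideal)
  hence "red_num UNIV (at_t0 ` tilde_ideal w I) = red_num loc_t (tilde_ideal w I)"
    by (rule red_num_at_t0)
  thus ?thesis
    by (simp add: at_t0_tilde_ideal)
qed

end
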